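(* Let $M$ be a matroid on $E=[n]$, $t,u$ positive integers, $\mathcal F$ the regular mixed subdivision defined below. Let $(X_1,Y_1)$ and $(X_2,Y_2)$ be two distinct ordered partitions of $[n]\setminus\{1\}$ into two (possibly empty) blocks, and for $k=1,2$ let $B_k$ be the unique basis such that $T_k=\mathbf e_{B_k}+u\Delta_{\{1\}\cup X_k}+t\nabla_{\{1\}\cup Y_k}$ is a top-degree face of $\mathcal F$. If $T_1\cap T_2\neq\emptyset$, then $B_1=B_2$.
   Context: $M$ is a matroid on $E=[n]=\{1,\dots,n\}$. $P(M)\subseteq\mathbb R^E$ is the convex hull of the indicator vectors $\mathbf e_B$ of bases $B$. For nonempty $S\subseteq E$, $\Delta_S=\operatorname{conv}\{\mathbf e_i:i\in S\}$, $\nabla_S=-\Delta_S$, $\Delta=\Delta_E$, $\nabla=\nabla_E$. The subdivision: fix reals $0<\alpha_1<\dots<\alpha_n$, $0<\beta_1<\dots<\beta_n$; let $\mathit{Lift}=\operatorname{conv}\{(u\mathbf e_i,\alpha_i)\}+(P(M)\times\{0\})+\operatorname{conv}\{(-t\mathbf e_i,\beta_i)\}\subseteq\mathbb R^E\times\mathbb R$. The lower faces of $\mathit{Lift}$ are the faces on which some linear functional with last coordinate $-1$ attains its maximum; their projections to $\mathbb R^E$ form the regular mixed subdivision $\mathcal F$ of $u\Delta+P(M)+t\nabla$. Each cell is canonically written $F+G+H$ (projections of the faces of the three summands of $\mathit{Lift}$ maximizing the same functional), with $F$ a face of $u\Delta$, $G$ a face of $P(M)$, $H$ a face of $t\nabla$.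 A top-degree face is a maximal cell $F+G+H$ of $\mathcal F$ with $G$ a vertex of $P(M)$. For each $X,Y$ with $X\cup Y=E$, $X\cap Y=\{1\}$ there is a unique basis $B$ such that $u\Delta_X+\mathbf e_B+t\nabla_Y$ is a top-degree face. *)

theory Defs
  imports "HOL-Analysis.Analysis" "HOL-Library.Function_Algebras"
begin

section \<open>Vectors in R^E, E = [n], as functions nat => real (pointwise real vector space)\<close>

instantiation "fun" :: (type, real_vector) real_vector
begin
definition scaleR_fun :: "real \<Rightarrow> ('a \<Rightarrow> 'b) \<Rightarrow> 'a \<Rightarrow> 'b"
  where "scaleR_fun r f = (\<lambda>x. r *\<^sub>R f x)"
instance
  by standard (auto simp: scaleR_fun_def fun_eq_iff scaleR_add_right scaleR_add_left)
end

definition indvec :: "nat set \<Rightarrow> nat \<Rightarrow> real" where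
  "indvec S = (\<lambda>i. if i \<in> S then 1 else 0)"

definition unitvec :: "nat \<Rightarrow> nat \<Rightarrow> real" where
  "unitvec i = indvec {i}"

definition matroid_bases :: "nat \<Rightarrow> nat set set \<Rightarrow> bool" where
  "matroid_bases n \<B> \<longleftrightarrow>
     \<B> \<noteq> {} \<and> (\<forall>B\<in>\<B>. B \<subseteq> {1..n}) \<and>
     (\<forall>B1\<in>\<B>. \<forall>B2\<in>\<B>. \<forall>x\<in>B1 - B2. \<exists>y\<in>B2 - B1. insert y (B1 - {x}) \<in> \<B>)"

definition matroid_polytope :: "nat set set \<Rightarrow> (nat \<Rightarrow> real) set" where
  "matroid_polytope \<B> = convex hull (indvec ` \<B>)"

definition Delta :: "nat set \<Rightarrow> (nat \<Rightarrow> real) set" where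
  "Delta S = convex hull (unitvec ` S)"

definition Nabla :: "nat set \<Rightarrow> (nat \<Rightarrow> real) set" where
  "Nabla S = uminus ` Delta S"

definition dilate :: "real \<Rightarrow> 'a::real_vector set \<Rightarrow> 'a set" where
  "dilate c S = (\<lambda>x. c *\<^sub>R x) ` S"

definition msum :: "'a::plus set \<Rightarrow> 'a set \<Rightarrow> 'a set" where
  "msum A B = {a + b | a b. a \<in> A \<and> b \<in> B}"

definition liftA :: "nat \<Rightarrow> (nat \<Rightarrow> real) \<Rightarrow> real \<Rightarrow> ((nat \<Rightarrow> real) \<times> real) set" where
  "liftA n \<alpha> u = convex hull {(u *\<^sub>R unitvec i, \<alpha> i) | i. i \<in> {1..n}}"

definition liftP :: "nat set set \<Rightarrow> ((nat \<Rightarrow> real) \<times> real) set" where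
  "liftP \<B> = matroid_polytope \<B> \<times> {0}"

definition liftN :: "nat \<Rightarrow> (nat \<Rightarrow> real) \<Rightarrow> real \<Rightarrow> ((nat \<Rightarrow> real) \<times> real) set" where
  "liftN n \<beta> t = convex hull {(- t *\<^sub>R unitvec i, \<beta> i) | i. i \<in> {1..n}}"

definition Lift :: "nat \<Rightarrow> nat set set \<Rightarrow> (nat \<Rightarrow> real) \<Rightarrow> (nat \<Rightarrow> real) \<Rightarrow> real \<Rightarrow> real
                    \<Rightarrow> ((nat \<Rightarrow> real) \<times> real) set" where
  "Lift n \<B> \<alpha> \<beta> u t = msum (msum (liftA n \<alpha> u) (liftP \<B>)) (liftN n \<beta> t)"

definition lfun :: "nat \<Rightarrow> (nat \<Rightarrow> real) \<Rightarrow> (nat \<Rightarrow> real) \<times> real \<Rightarrow> real" where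
  "lfun n w p = (\<Sum>i\<in>{1..n}. w i * fst p i) - snd p"

definition maxface :: "nat \<Rightarrow> (nat \<Rightarrow> real) \<Rightarrow> ((nat \<Rightarrow> real) \<times> real) set
                       \<Rightarrow> ((nat \<Rightarrow> real) \<times> real) set" where
  "maxface n w S = {p \<in> S. \<forall>q\<in>S. lfun n w q \<le> lfun n w p}"

text \<open>Cells of the regular mixed subdivision: projections of lower faces of Lift.\<close>
definition cells :: "nat \<Rightarrow> nat set set \<Rightarrow> (nat \<Rightarrow> real) \<Rightarrow> (nat \<Rightarrow> real) \<Rightarrow> real \<Rightarrow> real
                     \<Rightarrow> (nat \<Rightarrow> real) set set" where
  "cells n \<B> \<alpha> \<beta> u t = {fst ` maxface n w (Lift n \<B> \<alpha> \<beta> u t) | w. True}"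

definition canonical_cell ::
  "nat \<Rightarrow> nat set set \<Rightarrow> (nat \<Rightarrow> real) \<Rightarrow> (nat \<Rightarrow> real) \<Rightarrow> real \<Rightarrow> real
   \<Rightarrow> (nat \<Rightarrow> real) set \<Rightarrow> (nat \<Rightarrow> real) set \<Rightarrow> (nat \<Rightarrow> real) set \<Rightarrow> bool" where
  "canonical_cell n \<B> \<alpha> \<beta> u t F G H \<longleftrightarrow>
     (\<exists>w. F = fst ` maxface n w (liftA n \<alpha> u) \<and>
          G = fst ` maxface n w (liftP \<B>) \<and>
          H = fst ` maxface n w (liftN n \<beta> t))"

definition top_degree_face ::
  "nat \<Rightarrow> nat set set \<Rightarrow> (nat \<Rightarrow> real) \<Rightarrow> (nat \<Rightarrow> real) \<Rightarrow> real \<Rightarrow> real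
   \<Rightarrow> (nat \<Rightarrow> real) set \<Rightarrow> (nat \<Rightarrow> real) set \<Rightarrow> (nat \<Rightarrow> real) set \<Rightarrow> bool" where
  "top_degree_face n \<B> \<alpha> \<beta> u t F G H \<longleftrightarrow>
     canonical_cell n \<B> \<alpha> \<beta> u t F G H \<and>
     (\<exists>v. G = {v} \<and> v extreme_point_of matroid_polytope \<B>) \<and>
     (\<forall>C\<in>cells n \<B> \<alpha> \<beta> u t. msum (msum F G) H \<subseteq> C \<longrightarrow> C = msum (msum F G) H)"

end

theory Submission
  imports Defs
begin

text \<open>Let \<open>x\<close> lie in both cells, \<open>x = e\<^sub>B\<^sub>1 + a\<^sub>1 + h\<^sub>1 = e\<^sub>B\<^sub>2 + a\<^sub>2 + h\<^sub>2\<close>, where the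
  summands of the \<open>k\<close>-th decomposition lift to points of the three summands of \<open>Lift\<close> on which
  a functional \<open>w\<^sub>k\<close> is maximal. Both lifted sums lie over \<open>x\<close>, so they differ only in their
  height, and the gains of \<open>w\<^sub>1\<close> and of \<open>w\<^sub>2\<close> when passing from one lifted decomposition to the
  other cancel. Each summand contributes a non-negative amount to this sum, so every
  contribution vanishes; in particular \<open>e\<^sub>B\<^sub>2\<close> also maximizes \<open>w\<^sub>1\<close> on \<open>P(M)\<close>, whose
  \<open>w\<^sub>1\<close>-face is the single vertex \<open>e\<^sub>B\<^sub>1\<close>.\<close>

lemma lfun_add: "lfun n w (p + q) = lfun n w p + lfun n w q"
  by (simp add: lfun_def sum.distrib distrib_left)

lemma lfun_diff_same_fst:
  assumes "fst p = fst q"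
  shows "lfun n w p - lfun n w q = lfun n w' p - lfun n w' q"
  using assms by (simp add: lfun_def)

lemma maxface_msum:
  assumes "p \<in> maxface n w A" and "q \<in> maxface n w B"
  shows "p + q \<in> maxface n w (msum A B)"
proof -
  have "lfun n w (a + b) \<le> lfun n w (p + q)" if "a \<in> A" "b \<in> B" for a b
    using assms that by (simp add: maxface_def lfun_add add_mono)
  then show ?thesis
    using assms unfolding maxface_def msum_def by blast
qed

lemma maxface_exchange:
  assumes p1: "p1 \<in> maxface n w1 A" and p2: "p2 \<in> maxface n w2 A"
    and q1: "q1 \<in> maxface n w1 B" and q2: "q2 \<in> maxface n w2 B"
    and same_fst: "fst (p1 + q1) = fst (p2 + q2)"
  shows "p2 \<in> maxface n w1 A"
proof -
  have "lfun n w1 p2 \<le> lfun n w1 p1" "lfun n w1 q2 \<le> lfun n w1 q1"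
       "lfun n w2 p1 \<le> lfun n w2 p2" "lfun n w2 q1 \<le> lfun n w2 q2"
    using p1 p2 q1 q2 by (auto simp: maxface_def)
  moreover have "lfun n w1 (p1 + q1) - lfun n w1 (p2 + q2) = lfun n w2 (p1 + q1) - lfun n w2 (p2 + q2)"
    by (rule lfun_diff_same_fst[OF same_fst])
  ultimately have "lfun n w1 p2 = lfun n w1 p1"
    by (simp add: lfun_add)
  then show ?thesis
    using p1 p2 by (simp add: maxface_def)
qed

lemma canonical_cells_vertex_eq:
  assumes c1: "canonical_cell n \<B> \<alpha> \<beta> u t F1 {g1} H1"
    and c2: "canonical_cell n \<B> \<alpha> \<beta> u t F2 {g2} H2"
    and "a1 \<in> F1" "h1 \<in> H1" "a2 \<in> F2" "h2 \<in> H2"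
    and eq: "g1 + a1 + h1 = g2 + a2 + h2"
  shows "g1 = g2"
proof -
  obtain w1 where F1: "F1 = fst ` maxface n w1 (liftA n \<alpha> u)"
    and G1: "{g1} = fst ` maxface n w1 (liftP \<B>)"
    and H1: "H1 = fst ` maxface n w1 (liftN n \<beta> t)"
    using c1 unfolding canonical_cell_def by blast
  obtain w2 where F2: "F2 = fst ` maxface n w2 (liftA n \<alpha> u)"
    and G2: "{g2} = fst ` maxface n w2 (liftP \<B>)"
    and H2: "H2 = fst ` maxface n w2 (liftN n \<beta> t)"
    using c2 unfolding canonical_cell_def by blast
  obtain s1 r1 where "(a1, s1) \<in> maxface n w1 (liftA n \<alpha> u)" "(h1, r1) \<in> maxface n w1 (liftN n \<beta> t)"
    using \<open>a1 \<in> F1\<close> \<open>h1 \<in> H1\<close> F1 H1 by force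
  then have AN1: "(a1 + h1, s1 + r1) \<in> maxface n w1 (msum (liftA n \<alpha> u) (liftN n \<beta> t))"
    using maxface_msum by fastforce
  obtain s2 r2 where "(a2, s2) \<in> maxface n w2 (liftA n \<alpha> u)" "(h2, r2) \<in> maxface n w2 (liftN n \<beta> t)"
    using \<open>a2 \<in> F2\<close> \<open>h2 \<in> H2\<close> F2 H2 by force
  then have AN2: "(a2 + h2, s2 + r2) \<in> maxface n w2 (msum (liftA n \<alpha> u) (liftN n \<beta> t))"
    using maxface_msum by fastforce
  obtain z1 where P1: "(g1, z1) \<in> maxface n w1 (liftP \<B>)"
    using G1 by (metis fst_conv image_iff insertI1 prod.collapse)
  obtain z2 where P2: "(g2, z2) \<in> maxface n w2 (liftP \<B>)"
    using G2 by (metis fst_conv image_iff insertI1 prod.collapse)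
  have "(g2, z2) \<in> maxface n w1 (liftP \<B>)"
    using maxface_exchange[OF P1 P2 AN1 AN2] eq by (simp add: add.assoc)
  then show ?thesis
    using G1 by (metis fst_conv image_eqI singletonD)
qed

lemma indvec_eq_iff: "indvec A = indvec B \<longleftrightarrow> A = B"
  by (metis (mono_tags) indvec_def one_neq_zero subsetI subset_antisym)

theorem mainTheorem8:
  fixes n :: nat and \<B> :: "nat set set" and \<alpha> \<beta> :: "nat \<Rightarrow> real" and t u :: nat
    and X1 Y1 X2 Y2 B1 B2 :: "nat set"
  assumes "1 \<le> n"
    and "matroid_bases n \<B>"
    and "0 < t" and "0 < u"
    and "0 < \<alpha> 1" and "\<And>i j. 1 \<le> i \<Longrightarrow> i < j \<Longrightarrow> j \<le> n \<Longrightarrow> \<alpha> i < \<alpha> j"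
    and "0 < \<beta> 1" and "\<And>i j. 1 \<le> i \<Longrightarrow> i < j \<Longrightarrow> j \<le> n \<Longrightarrow> \<beta> i < \<beta> j"
    and "X1 \<union> Y1 = {2..n}" and "X1 \<inter> Y1 = {}"
    and "X2 \<union> Y2 = {2..n}" and "X2 \<inter> Y2 = {}"
    and "(X1, Y1) \<noteq> (X2, Y2)"
    and "B1 \<in> \<B>" and "B2 \<in> \<B>"
    and "top_degree_face n \<B> \<alpha> \<beta> (real u) (real t)
           (dilate (real u) (Delta ({1} \<union> X1))) {indvec B1} (dilate (real t) (Nabla ({1} \<union> Y1)))"
    and "top_degree_face n \<B> \<alpha> \<beta> (real u) (real t)
           (dilate (real u) (Delta ({1} \<union> X2))) {indvec B2} (dilate (real t) (Nabla ({1} \<union> Y2)))"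
    and "msum (msum {indvec B1} (dilate (real u) (Delta ({1} \<union> X1)))) (dilate (real t) (Nabla ({1} \<union> Y1)))
         \<inter> msum (msum {indvec B2} (dilate (real u) (Delta ({1} \<union> X2)))) (dilate (real t) (Nabla ({1} \<union> Y2)))
         \<noteq> {}"
  shows "B1 = B2"
proof -
  obtain a1 h1 a2 h2 where
    "a1 \<in> dilate (real u) (Delta ({1} \<union> X1))" "h1 \<in> dilate (real t) (Nabla ({1} \<union> Y1))"
    "a2 \<in> dilate (real u) (Delta ({1} \<union> X2))" "h2 \<in> dilate (real t) (Nabla ({1} \<union> Y2))"
    "indvec B1 + a1 + h1 = indvec B2 + a2 + h2"
    using assms(18) unfolding msum_def by fastforce
  moreover have "canonical_cell n \<B> \<alpha> \<beta> (real u) (real t)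
      (dilate (real u) (Delta ({1} \<union> X1))) {indvec B1} (dilate (real t) (Nabla ({1} \<union> Y1)))"
    "canonical_cell n \<B> \<alpha> \<beta> (real u) (real t)
      (dilate (real u) (Delta ({1} \<union> X2))) {indvec B2} (dilate (real t) (Nabla ({1} \<union> Y2)))"
    using assms(16,17) by (simp_all add: top_degree_face_def)
  ultimately have "indvec B1 = indvec B2"
    using canonical_cells_vertex_eq by blast
  then show ?thesis
    by (simp add: indvec_eq_iff)
qed

end
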